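(* Let $\mathscr{X}$ be a totally bounded normed metric space, consider a channel with transition mapping $N$ as described in the context, and let $0\le\delta<m_{\mathscr{Y}}(V_N)$. Then $$C^\delta_N=\sup\Big\{ I_{\tilde\delta/|[\![X]\!]|}(Y;X)\ :\ X\text{ a transmitted UV with }[\![X]\!]\subseteq\mathscr{X},\ 0\le\tilde\delta\le \delta/m_{\mathscr{Y}}([\![Y]\!])\Big\}\ \text{bits},$$ where $Y$ is the received UV corresponding to $X$.
   Context: Uncertain variables (UVs): a UV is a map $U$ from a sample space $\Omega$ to a set; jointly considered UVs share $\Omega$. $[\![U]\!]=\{U(\omega)\}$; $[\![U|w]\!]=\{U(\omega):W(\omega)=w\}$, $[\![U|W]\!]=\{[\![U|w]\!]:w\in[\![W]\!]\}$. An uncertainty function on a set $\mathscr{U}$ is a map $m$ on subsets of $\mathscr{U}$ with $m(\emptyset)=0$, $0<m(S)<\infty$ for nonempty $S$, $\max\{m(S_1),m(S_2)\}\le m(S_1\cup S_2)$. $\delta$-mutual information: for UVs $U$ (values in $\mathscr{U}$ with uncertainty function $m_{\mathscr{U}}$) and $W$, points $u,u'\in[\![U]\!]$ are $\delta$-connected via $[\![U|W]\!]$ if there are $w_1,\dots,w_N\in[\![W]\!]$ with $u\in[\![U|w_1]\!]$, $u'\in[\![U|w_N]\!]$, $m_{\mathscr{U}}([\![U|w_i]\!]\cap[\![U|w_{i-1}]\!])/m_{\mathscr{U}}([\![U]\!])>\delta$ for $1<i\le N$; a set is $\delta$-connected if all pairs of its points are. A $\delta$-overlap family $[\![U|W]\!]^*_\delta$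 is a family of distinct subsets covering $[\![U]\!]$, of largest cardinality among covering families such that (i) each member is $\delta$-connected and contains some $[\![U|w]\!]$; (ii) distinct members $S_1,S_2$ satisfy $m_{\mathscr{U}}(S_1\cap S_2)\le\delta\, m_{\mathscr{U}}([\![U]\!])$; (iii) each $[\![U|w]\!]$ lies in some member. $I_\delta(U;W)=\log_2|[\![U|W]\!]^*_\delta|$ if such a family exists, else $0$. Channel: $\mathscr{Y}$ is the output set, $N$ maps each $x\in\mathscr{X}$ to a set $N(x)\subseteq\mathscr{Y}$; $m_{\mathscr{X}},m_{\mathscr{Y}}$ are uncertainty functions on $\mathscr{X},\mathscr{Y}$ with $m_{\mathscr{Y}}(\mathscr{Y})=1$. $V_N=N(x^* )$ where $x^*$ minimizes $m_{\mathscr{Y}}(N(x))$ over $\mathscr{X}$. A codebook is a discrete set $\mathcal{C}\subseteq\mathscr{X}$; $e_N(x_1,x_2)=m_{\mathscr{Y}}(N(x_1)\cap N(x_2))/m_{\mathscr{Y}}(\mathscr{Y})$; $\mathcal{C}$ is $(N,\delta)$-distinguishable if $e_N(x_1,x_2)\le\delta/|\mathcal{C}|$ for all distinct $x_1,x_2\in\mathcal{C}$; $C^\delta_N=\sup\log_2|\mathcal{C}|$ over $(N,\delta)$-distinguishable codebooks. For a codebook $\mathcal{C}$, the transmitted UV $X$ and received UV $Y$ satisfy $[\![X]\!]=\mathcal{C}$, $[\![Y]\!]=\bigcup_{x\in\mathcal{C}}N(x)$, $[\![Y|x]\!]=\{y\in[\![Y]\!]:y\in N(x)\}$, $[\![X|y]\!]=\{x\in[\![X]\!]:y\in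 N(x)\}$. *)

theory Defs
  imports "HOL-Analysis.Analysis"
begin

definition uncertainty_function :: "('a set \<Rightarrow> real) \<Rightarrow> 'a set \<Rightarrow> bool" where
  "uncertainty_function m A \<longleftrightarrow>
     m {} = 0 \<and>
     (\<forall>S. S \<subseteq> A \<and> S \<noteq> {} \<longrightarrow> 0 < m S) \<and>
     (\<forall>S1 S2. S1 \<subseteq> A \<and> S2 \<subseteq> A \<longrightarrow> max (m S1) (m S2) \<le> m (S1 \<union> S2))"

text \<open>Generic setting: U is the range [[U]], Wr the range [[W]], F w = [[U|w]],
  m the uncertainty function on the value set of U.\<close>

definition delta_connected ::
  "('u set \<Rightarrow> real) \<Rightarrow> 'u set \<Rightarrow> 'w set \<Rightarrow> ('w \<Rightarrow> 'u set) \<Rightarrow> real \<Rightarrow> 'u \<Rightarrow> 'u \<Rightarrow> bool" where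
  "delta_connected m U Wr F \<delta> u u' \<longleftrightarrow>
     (\<exists>ws. ws \<noteq> [] \<and> set ws \<subseteq> Wr \<and> u \<in> F (hd ws) \<and> u' \<in> F (last ws) \<and>
        (\<forall>i. 0 < i \<and> i < length ws \<longrightarrow>
           m (F (ws ! i) \<inter> F (ws ! (i - 1))) / m U > \<delta>))"

definition delta_connected_set ::
  "('u set \<Rightarrow> real) \<Rightarrow> 'u set \<Rightarrow> 'w set \<Rightarrow> ('w \<Rightarrow> 'u set) \<Rightarrow> real \<Rightarrow> 'u set \<Rightarrow> bool" where
  "delta_connected_set m U Wr F \<delta> S \<longleftrightarrow>
     (\<forall>u\<in>S. \<forall>u'\<in>S. delta_connected m U Wr F \<delta> u u')"

definition admissible_family ::
  "('u set \<Rightarrow> real) \<Rightarrow> 'u set \<Rightarrow> 'w set \<Rightarrow> ('w \<Rightarrow> 'u set) \<Rightarrow> real \<Rightarrow> 'u set set \<Rightarrow> bool" where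
  "admissible_family m U Wr F \<delta> \<S> \<longleftrightarrow>
     (\<forall>S\<in>\<S>. S \<subseteq> U) \<and> \<Union>\<S> = U \<and>
     (\<forall>S\<in>\<S>. delta_connected_set m U Wr F \<delta> S \<and> (\<exists>w\<in>Wr. F w \<subseteq> S)) \<and>
     (\<forall>S1\<in>\<S>. \<forall>S2\<in>\<S>. S1 \<noteq> S2 \<longrightarrow> m (S1 \<inter> S2) \<le> \<delta> * m U) \<and>
     (\<forall>w\<in>Wr. \<exists>S\<in>\<S>. F w \<subseteq> S)"

text \<open>A delta-overlap family: admissible and of largest cardinality among admissible
  families (cardinality comparison via injections, so infinite families are allowed).\<close>
definition overlap_family ::
  "('u set \<Rightarrow> real) \<Rightarrow> 'u set \<Rightarrow> 'w set \<Rightarrow> ('w \<Rightarrow> 'u set) \<Rightarrow> real \<Rightarrow> 'u set set \<Rightarrow> bool" where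
  "overlap_family m U Wr F \<delta> \<S> \<longleftrightarrow>
     admissible_family m U Wr F \<delta> \<S> \<and>
     (\<forall>\<S>'. admissible_family m U Wr F \<delta> \<S>' \<longrightarrow> (\<exists>f. inj_on f \<S>' \<and> f ` \<S>' \<subseteq> \<S>))"

text \<open>All overlap families have the same
  cardinality, so the choice is immaterial.\<close>
definition delta_mutual_info ::
  "('u set \<Rightarrow> real) \<Rightarrow> 'u set \<Rightarrow> 'w set \<Rightarrow> ('w \<Rightarrow> 'u set) \<Rightarrow> real \<Rightarrow> ereal" where
  "delta_mutual_info m U Wr F \<delta> =
     (if \<exists>\<S>. overlap_family m U Wr F \<delta> \<S>
      then (let \<S> = (SOME \<S>. overlap_family m U Wr F \<delta> \<S>) in
            if finite \<S> then ereal (log 2 (real (card \<S>))) else \<infinity>)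
      else 0)"

text \<open>Codebooks: discrete (here: finite, nonempty) subsets of the input set.\<close>
definition codebook :: "'x set \<Rightarrow> 'x set \<Rightarrow> bool" where
  "codebook Xs C \<longleftrightarrow> C \<subseteq> Xs \<and> finite C \<and> C \<noteq> {}"

definition e_N :: "('y set \<Rightarrow> real) \<Rightarrow> 'y set \<Rightarrow> ('x \<Rightarrow> 'y set) \<Rightarrow> 'x \<Rightarrow> 'x \<Rightarrow> real" where
  "e_N mY Ys N x1 x2 = mY (N x1 \<inter> N x2) / mY Ys"

definition distinguishable ::
  "('y set \<Rightarrow> real) \<Rightarrow> 'y set \<Rightarrow> ('x \<Rightarrow> 'y set) \<Rightarrow> real \<Rightarrow> 'x set \<Rightarrow> bool" where
  "distinguishable mY Ys N \<delta> C \<longleftrightarrow>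
     (\<forall>x1\<in>C. \<forall>x2\<in>C. x1 \<noteq> x2 \<longrightarrow> e_N mY Ys N x1 x2 \<le> \<delta> / real (card C))"

definition capacity_delta ::
  "'x set \<Rightarrow> ('y set \<Rightarrow> real) \<Rightarrow> 'y set \<Rightarrow> ('x \<Rightarrow> 'y set) \<Rightarrow> real \<Rightarrow> ereal" where
  "capacity_delta Xs mY Ys N \<delta> =
     Sup {ereal (log 2 (real (card C))) | C. codebook Xs C \<and> distinguishable mY Ys N \<delta> C}"

text \<open>Transmitted UV X with range C and received UV Y: [[Y]] = \<Union>N`C, [[Y|x]] = N x \<inter> [[Y]].\<close>
definition received_range :: "('x \<Rightarrow> 'y set) \<Rightarrow> 'x set \<Rightarrow> 'y set" where
  "received_range N C = (\<Union>x\<in>C. N x)"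

definition cond_received :: "('x \<Rightarrow> 'y set) \<Rightarrow> 'x set \<Rightarrow> 'x \<Rightarrow> 'y set" where
  "cond_received N C x = {y \<in> received_range N C. y \<in> N x}"

end

theory Submission
  imports Defs
begin

(* Every output set N x has uncertainty above delta, whereas two distinct members of an
   admissible family for [[Y|X]] overlap in uncertainty at most delta'/|C| * m([[Y]]) <= delta.
   So no output set lies in two distinct members, and choosing for each member a codeword whose
   output set it contains is injective; these codewords form a distinguishable codebook of the
   same size. Conversely, for a distinguishable codebook C the output sets N x, x in C, themselves
   form a delta-overlap family at level delta' = delta / m([[Y]]), so the delta-mutual
   information equals log |C|. *)

lemma uncertainty_function_mono:
  assumes "uncertainty_function m A" "S \<subseteq> T" "T \<subseteq> A"
  shows "m S \<le> m T"
proof -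
  have "max (m S) (m T) \<le> m (S \<union> T)"
    using assms unfolding uncertainty_function_def by (meson order_trans)
  with \<open>S \<subseteq> T\<close> show ?thesis by (simp add: Un_absorb1)
qed

lemma uncertainty_function_empty: "uncertainty_function m A \<Longrightarrow> m {} = 0"
  unfolding uncertainty_function_def by simp

lemma uncertainty_function_pos:
  "uncertainty_function m A \<Longrightarrow> S \<subseteq> A \<Longrightarrow> S \<noteq> {} \<Longrightarrow> 0 < m S"
  unfolding uncertainty_function_def by simp

lemma admissible_familyD:
  assumes "admissible_family m U Wr F d \<S>"
  shows "\<And>S. S \<in> \<S> \<Longrightarrow> S \<subseteq> U"
    and "\<Union>\<S> = U"
    and "\<And>S. S \<in> \<S> \<Longrightarrow> \<exists>w\<in>Wr. F w \<subseteq> S"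
    and "\<And>S1 S2. S1 \<in> \<S> \<Longrightarrow> S2 \<in> \<S> \<Longrightarrow> S1 \<noteq> S2 \<Longrightarrow> m (S1 \<inter> S2) \<le> d * m U"
  using assms unfolding admissible_family_def by simp_all

lemma admissible_family_inj_witness:
  assumes adm: "admissible_family m U Wr F d \<S>"
    and unc: "uncertainty_function m A" and "U \<subseteq> A"
    and big: "\<And>w. w \<in> Wr \<Longrightarrow> d * m U < m (F w)"
  obtains f where "inj_on f \<S>" "f ` \<S> \<subseteq> Wr" "\<And>S. S \<in> \<S> \<Longrightarrow> F (f S) \<subseteq> S"
proof -
  note sub = admissible_familyD(1)[OF adm] and overlap = admissible_familyD(4)[OF adm]
  have "\<forall>S\<in>\<S>. \<exists>w. w \<in> Wr \<and> F w \<subseteq> S"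
    using admissible_familyD(3)[OF adm] by blast
  then obtain f where "\<forall>S\<in>\<S>. f S \<in> Wr \<and> F (f S) \<subseteq> S"
    by (rule bchoice[THEN exE])
  then have f: "\<And>S. S \<in> \<S> \<Longrightarrow> f S \<in> Wr" "\<And>S. S \<in> \<S> \<Longrightarrow> F (f S) \<subseteq> S"
    by simp_all
  have "inj_on f \<S>"
  proof (rule inj_onI, rule ccontr)
    fix S1 S2 assume S: "S1 \<in> \<S>" "S2 \<in> \<S>" "f S1 = f S2" "S1 \<noteq> S2"
    have "F (f S1) \<subseteq> S1 \<inter> S2"
      using f(2)[OF S(1)] f(2)[OF S(2)] S(3) by simp
    moreover have "S1 \<inter> S2 \<subseteq> A"
      using sub[OF S(1)] \<open>U \<subseteq> A\<close> by blast
    ultimately have "m (F (f S1)) \<le> m (S1 \<inter> S2)"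
      by (rule uncertainty_function_mono[OF unc])
    also have "\<dots> \<le> d * m U"
      using overlap[OF S(1,2,4)] .
    finally show False
      using big[OF f(1)[OF S(1)]] by simp
  qed
  with f that show ?thesis by blast
qed

lemma delta_mutual_info_eq_log_card:
  assumes "overlap_family m U Wr F d \<S>" "finite \<S>"
  shows "delta_mutual_info m U Wr F d = ereal (log 2 (card \<S>))"
proof -
  define \<T> where "\<T> = (SOME \<T>. overlap_family m U Wr F d \<T>)"
  have "overlap_family m U Wr F d \<T>"
    unfolding \<T>_def using assms(1) by (rule someI)
  with assms obtain g h
    where g: "inj_on g \<T>" "g ` \<T> \<subseteq> \<S>" and h: "inj_on h \<S>" "h ` \<S> \<subseteq> \<T>"
    unfolding overlap_family_def by meson
  have "finite \<T>"
    using inj_on_finite[OF g \<open>finite \<S>\<close>] .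
  moreover have "card \<T> = card \<S>"
    using card_inj_on_le[OF g \<open>finite \<S>\<close>] card_inj_on_le[OF h \<open>finite \<T>\<close>] by simp
  ultimately show ?thesis
    using assms(1) unfolding delta_mutual_info_def \<T>_def[symmetric] by (auto simp: Let_def)
qed

lemma overlap_family_image:
  assumes unc: "uncertainty_function m A" "U \<subseteq> A"
    and U_eq: "U = (\<Union>w\<in>Wr. F w)"
    and overlap: "\<And>w w'. w \<in> Wr \<Longrightarrow> w' \<in> Wr \<Longrightarrow> w \<noteq> w' \<Longrightarrow> m (F w \<inter> F w') \<le> d * m U"
    and big: "\<And>w. w \<in> Wr \<Longrightarrow> d * m U < m (F w)"
  shows "overlap_family m U Wr F d (F ` Wr)" and "inj_on F Wr"
proof -
  show inj: "inj_on F Wr"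
  proof (rule inj_onI, rule ccontr)
    fix w w' assume "w \<in> Wr" "w' \<in> Wr" "F w = F w'" "w \<noteq> w'"
    with overlap[of w w'] big[of w] show False by simp
  qed
  have connected: "delta_connected_set m U Wr F d (F w)" if "w \<in> Wr" for w
    unfolding delta_connected_set_def
  proof (intro ballI)
    fix u u' assume "u \<in> F w" "u' \<in> F w"
    with that show "delta_connected m U Wr F d u u'"
      unfolding delta_connected_def by (intro exI[of _ "[w]"]) simp
  qed
  have "admissible_family m U Wr F d (F ` Wr)"
    unfolding admissible_family_def
  proof (intro conjI ballI impI)
    show "\<Union> (F ` Wr) = U"
      using U_eq by simp
    show "S \<subseteq> U" "delta_connected_set m U Wr F d S" "\<exists>w\<in>Wr. F w \<subseteq> S"
      if "S \<in> F ` Wr" for S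
      using that connected U_eq by auto
    show "m (S1 \<inter> S2) \<le> d * m U" if "S1 \<in> F ` Wr" "S2 \<in> F ` Wr" "S1 \<noteq> S2" for S1 S2
      using that overlap by auto
    show "\<exists>S\<in>F ` Wr. F w \<subseteq> S" if "w \<in> Wr" for w
      using that by blast
  qed
  moreover have "\<exists>g. inj_on g \<S> \<and> g ` \<S> \<subseteq> F ` Wr"
    if adm: "admissible_family m U Wr F d \<S>" for \<S>
  proof -
    obtain f where f: "inj_on f \<S>" "f ` \<S> \<subseteq> Wr" "\<And>S. S \<in> \<S> \<Longrightarrow> F (f S) \<subseteq> S"
      using admissible_family_inj_witness[OF adm unc big] by blast
    then have "inj_on (F \<circ> f) \<S>"
      using comp_inj_on inj_on_subset[OF inj] by blast
    moreover have "(F \<circ> f) ` \<S> \<subseteq> F ` Wr"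
      using f(2) by (auto simp: image_comp[symmetric])
    ultimately show ?thesis by blast
  qed
  ultimately show "overlap_family m U Wr F d (F ` Wr)"
    unfolding overlap_family_def by blast
qed

lemma delta_mutual_info_image:
  assumes "uncertainty_function m A" "U \<subseteq> A" "finite Wr"
    and "U = (\<Union>w\<in>Wr. F w)"
    and "\<And>w w'. w \<in> Wr \<Longrightarrow> w' \<in> Wr \<Longrightarrow> w \<noteq> w' \<Longrightarrow> m (F w \<inter> F w') \<le> d * m U"
    and "\<And>w. w \<in> Wr \<Longrightarrow> d * m U < m (F w)"
  shows "delta_mutual_info m U Wr F d = ereal (log 2 (card Wr))"
proof -
  have "delta_mutual_info m U Wr F d = ereal (log 2 (card (F ` Wr)))"
    using assms by (intro delta_mutual_info_eq_log_card overlap_family_image(1)) auto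
  also have "card (F ` Wr) = card Wr"
    using assms by (intro card_image overlap_family_image(2)) auto
  finally show ?thesis .
qed

lemma cond_received_eq: "x \<in> C \<Longrightarrow> cond_received N C x = N x"
  unfolding cond_received_def received_range_def by auto

lemma log_card_le_capacity_delta:
  assumes "codebook Xs C" "distinguishable mY Ys N \<delta> C"
  shows "ereal (log 2 (card C)) \<le> capacity_delta Xs mY Ys N \<delta>"
  unfolding capacity_delta_def using assms by (blast intro: Sup_upper)

lemma capacity_delta_nonneg:
  assumes "x \<in> Xs"
  shows "0 \<le> capacity_delta Xs mY Ys N \<delta>"
proof -
  have "codebook Xs {x}" "distinguishable mY Ys N \<delta> {x}"
    using assms unfolding codebook_def distinguishable_def by auto
  from log_card_le_capacity_delta[OF this] show ?thesis by (simp add: zero_ereal_def)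
qed

(* delta_less is the hypothesis delta < m(V_N), V_N having the least uncertainty among the
   output sets. *)
locale delta_channel =
  fixes Xs :: "'x set" and Ys :: "'y set" and N :: "'x \<Rightarrow> 'y set"
    and mY :: "'y set \<Rightarrow> real" and \<delta> :: real
  assumes N_subset: "\<And>x. x \<in> Xs \<Longrightarrow> N x \<subseteq> Ys"
    and mY_unc: "uncertainty_function mY Ys"
    and mY_norm: "mY Ys = 1"
    and delta_nonneg: "0 \<le> \<delta>"
    and delta_less: "\<And>x. x \<in> Xs \<Longrightarrow> \<delta> < mY (N x)"
begin

lemma received_range_subset: "codebook Xs C \<Longrightarrow> received_range N C \<subseteq> Ys"
  using N_subset unfolding codebook_def received_range_def by blast

lemma received_range_pos:
  assumes "codebook Xs C"
  shows "0 < mY (received_range N C)"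
proof -
  obtain x where "x \<in> C" "x \<in> Xs"
    using assms unfolding codebook_def by blast
  with delta_less[of x] delta_nonneg uncertainty_function_empty[OF mY_unc] have "N x \<noteq> {}"
    by auto
  with \<open>x \<in> C\<close> have "received_range N C \<noteq> {}"
    unfolding received_range_def by blast
  with received_range_subset[OF assms] show ?thesis
    by (rule uncertainty_function_pos[OF mY_unc])
qed

lemma cond_received_measure_gt:
  assumes "codebook Xs C" "x \<in> C" "d \<le> \<delta>"
  shows "d < mY (cond_received N C x)"
  using assms delta_less[of x] cond_received_eq[of x C N] unfolding codebook_def by force

lemma card_scaled_le:
  assumes "codebook Xs C"
  shows "\<delta> / card C \<le> \<delta>"
proof -
  have "1 \<le> card C"
    using assms unfolding codebook_def by (simp add: Suc_le_eq card_gt_0_iff)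
  then have "\<delta> / card C \<le> \<delta> / 1"
    using delta_nonneg by (intro divide_left_mono) auto
  then show ?thesis by simp
qed

lemma delta_mutual_info_distinguishable:
  assumes C: "codebook Xs C" and dist: "distinguishable mY Ys N \<delta> C"
  defines "U \<equiv> received_range N C"
  shows "delta_mutual_info mY U C (cond_received N C) (\<delta> / mY U / card C)
           = ereal (log 2 (card C))"
proof (rule delta_mutual_info_image[OF mY_unc])
  have scale: "\<delta> / mY U / card C * mY U = \<delta> / card C"
    using received_range_pos[OF C] unfolding U_def by simp
  show "U \<subseteq> Ys" "finite C" "U = (\<Union>x\<in>C. cond_received N C x)"
    using C received_range_subset[OF C] cond_received_eq[of _ C N]
    unfolding U_def codebook_def received_range_def by auto
  show "mY (cond_received N C x \<inter> cond_received N C x') \<le> \<delta> / mY U / card C * mY U"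
    if "x \<in> C" "x' \<in> C" "x \<noteq> x'" for x x'
    using dist that cond_received_eq[of _ C N]
    unfolding scale distinguishable_def e_N_def mY_norm by simp
  show "\<delta> / mY U / card C * mY U < mY (cond_received N C x)" if "x \<in> C" for x
    unfolding scale using cond_received_measure_gt[OF C that card_scaled_le[OF C]] .
qed

lemma admissible_family_distinguishable:
  assumes C: "codebook Xs C" and \<delta>': "\<delta>' \<le> \<delta> / mY (received_range N C)"
    and adm: "admissible_family mY (received_range N C) C (cond_received N C) (\<delta>' / card C) \<S>"
  obtains C' where "C' \<subseteq> C" "card C' = card \<S>" "finite \<S>" "distinguishable mY Ys N \<delta> C'"
proof -
  let ?U = "received_range N C"
  have overlap_le: "\<delta>' / card C * mY ?U \<le> \<delta> / card C"
    using \<delta>' received_range_pos[OF C] by (simp add: divide_right_mono pos_le_divide_eq)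
  have "\<delta>' / card C * mY ?U < mY (cond_received N C x)" if "x \<in> C" for x
    using overlap_le card_scaled_le[OF C] by (intro cond_received_measure_gt[OF C that]) linarith
  then obtain f where f: "inj_on f \<S>" "f ` \<S> \<subseteq> C"
    and f_sub: "\<And>S. S \<in> \<S> \<Longrightarrow> cond_received N C (f S) \<subseteq> S"
    using admissible_family_inj_witness[OF adm mY_unc received_range_subset[OF C]] by blast
  have "finite C"
    using C unfolding codebook_def by simp
  with f have "finite \<S>"
    by (rule inj_on_finite)
  moreover have "distinguishable mY Ys N \<delta> (f ` \<S>)"
    unfolding distinguishable_def e_N_def mY_norm
  proof (intro ballI impI)
    fix x1 x2 assume x: "x1 \<in> f ` \<S>" "x2 \<in> f ` \<S>" "x1 \<noteq> x2"
    then obtain S1 S2 where S: "S1 \<in> \<S>" "S2 \<in> \<S>" "x1 = f S1" "x2 = f S2" "S1 \<noteq> S2"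
      by blast
    have "S1 \<inter> S2 \<subseteq> Ys"
      using admissible_familyD(1)[OF adm S(1)] received_range_subset[OF C] by blast
    then have "mY (N x1 \<inter> N x2) \<le> mY (S1 \<inter> S2)"
      using S f_sub f(2) cond_received_eq[of _ C N]
      by (intro uncertainty_function_mono[OF mY_unc]) (auto simp: image_subset_iff)
    also have "\<dots> \<le> \<delta>' / card C * mY ?U"
      using admissible_familyD(4)[OF adm S(1,2,5)] .
    also have "\<dots> \<le> \<delta> / card C"
      by (rule overlap_le)
    also have "\<dots> \<le> \<delta> / card (f ` \<S>)"
    proof -
      have "0 < card (f ` \<S>)"
        using x(1) f(2) \<open>finite C\<close> by (auto simp: card_gt_0_iff finite_subset)
      moreover have "card (f ` \<S>) \<le> card C"
        using f(2) \<open>finite C\<close> by (rule card_mono[rotated])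
      ultimately show ?thesis
        using delta_nonneg by (intro divide_left_mono) auto
    qed
    finally show "mY (N x1 \<inter> N x2) / 1 \<le> \<delta> / card (f ` \<S>)" by simp
  qed
  ultimately show ?thesis
    using that f by (simp add: card_image)
qed

lemma delta_mutual_info_le_capacity:
  assumes C: "codebook Xs C" and \<delta>': "\<delta>' \<le> \<delta> / mY (received_range N C)"
  shows "delta_mutual_info mY (received_range N C) C (cond_received N C) (\<delta>' / card C)
           \<le> capacity_delta Xs mY Ys N \<delta>"
proof (cases "\<exists>\<S>. overlap_family mY (received_range N C) C (cond_received N C) (\<delta>' / card C) \<S>")
  case False
  obtain x where "x \<in> Xs"
    using C unfolding codebook_def by blast
  then have "0 \<le> capacity_delta Xs mY Ys N \<delta>"
    by (rule capacity_delta_nonneg)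
  moreover have "delta_mutual_info mY (received_range N C) C (cond_received N C) (\<delta>' / card C) = 0"
    using False unfolding delta_mutual_info_def by (simp only: if_False)
  ultimately show ?thesis by simp
next
  case True
  then obtain \<S> where ov: "overlap_family mY (received_range N C) C (cond_received N C) (\<delta>' / card C) \<S>"
    by blast
  then have adm: "admissible_family mY (received_range N C) C (cond_received N C) (\<delta>' / card C) \<S>"
    unfolding overlap_family_def by (rule conjunct1)
  obtain C' where C': "C' \<subseteq> C" "card C' = card \<S>" "finite \<S>" "distinguishable mY Ys N \<delta> C'"
    using admissible_family_distinguishable[OF C \<delta>' adm] .
  have "\<S> \<noteq> {}"
    using admissible_familyD(2)[OF adm] received_range_pos[OF C] uncertainty_function_empty[OF mY_unc]
    by force
  with C C' have "codebook Xs C'"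
    unfolding codebook_def by (auto simp: finite_subset)
  with C' show ?thesis
    using delta_mutual_info_eq_log_card[OF ov] log_card_le_capacity_delta[of Xs C'] by simp
qed

end

theorem theorem8:
  fixes Xs :: "'x::real_normed_vector set"
    and Ys :: "'y set"
    and N :: "'x \<Rightarrow> 'y set"
    and mX :: "'x set \<Rightarrow> real"
    and mY :: "'y set \<Rightarrow> real"
    and xstar :: 'x
    and \<delta> :: real
  assumes tb: "totally_bounded Xs"
    and N_out: "\<forall>x\<in>Xs. N x \<subseteq> Ys"
    and mX_unc: "uncertainty_function mX Xs"
    and mY_unc: "uncertainty_function mY Ys"
    and mY_norm: "mY Ys = 1"
    and xstar_in: "xstar \<in> Xs"
    and xstar_min: "\<forall>x\<in>Xs. mY (N xstar) \<le> mY (N x)"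
    and delta_nonneg: "0 \<le> \<delta>"
    and delta_lt: "\<delta> < mY (N xstar)"
  shows "capacity_delta Xs mY Ys N \<delta> =
    Sup {delta_mutual_info mY (received_range N C) C (cond_received N C) (\<delta>' / real (card C)) | C \<delta>'.
           codebook Xs C \<and> 0 \<le> \<delta>' \<and> \<delta>' \<le> \<delta> / mY (received_range N C)}"
    (is "_ = Sup ?I")
proof -
  interpret delta_channel Xs Ys N mY \<delta>
    using N_out mY_unc mY_norm delta_nonneg xstar_min delta_lt
    by unfold_locales (auto intro: less_le_trans)
  show ?thesis
  proof (rule antisym)
    show "capacity_delta Xs mY Ys N \<delta> \<le> Sup ?I"
      unfolding capacity_delta_def
    proof (rule Sup_least, clarify)
      fix C assume C: "codebook Xs C" "distinguishable mY Ys N \<delta> C"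
      have "\<delta> / mY (received_range N C) \<ge> 0"
        using delta_nonneg received_range_pos[OF C(1)] by simp
      then have "delta_mutual_info mY (received_range N C) C (cond_received N C)
          (\<delta> / mY (received_range N C) / card C) \<in> ?I"
        using C(1) by blast
      then show "ereal (log 2 (card C)) \<le> Sup ?I"
        unfolding delta_mutual_info_distinguishable[OF C] by (rule Sup_upper)
    qed
    show "Sup ?I \<le> capacity_delta Xs mY Ys N \<delta>"
      by (rule Sup_least) (auto intro: delta_mutual_info_le_capacity)
  qed
qed

end
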